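(* Let $\mathcal F$ be a Finsler function on $\mathbb R^n$, and let $((x^i),(y^i))$ be the coordinates on $T\mathbb R^n$ induced by the canonical coordinates of $\mathbb R^n$. Then $(\mathbb R^n,\mathcal F)$ is a Minkowski space (i.e. $\mathcal F(p,v)$ does not depend on $p$) if and only if $$\frac{\partial^2\mathcal F^2}{\partial x^k\partial y^i}\,y^k=\frac12\,\frac{\partial^2\mathcal F^2}{\partial x^i\partial y^k}\,y^k,\qquad i=1,\dots,n,$$ holds on $\mathbb R^n\times(\mathbb R^n\setminus\{0\})$.
   Context: A Finsler function on $\mathbb R^n$ is $\mathcal F\colon\mathbb R^n\times\mathbb R^n\to\mathbb R$ smooth and positive on $\{(p,v):v\neq0\}$, positively $1$-homogeneous in $v$, and strongly convex ($\partial^2\mathcal F^2/\partial y^i\partial y^j$ positive definite for $v\ne0$). Summation over repeated indices. *)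

theory Defs
  imports "HOL-Analysis.Analysis"
begin

definition pderiv_dir :: "('a::euclidean_space \<Rightarrow> real) \<Rightarrow> 'a \<Rightarrow> 'a \<Rightarrow> real" where
  "pderiv_dir f b z = frechet_derivative f (at z) b"

fun Ck_on :: "nat \<Rightarrow> 'a::euclidean_space set \<Rightarrow> ('a \<Rightarrow> real) \<Rightarrow> bool" where
  "Ck_on 0 S f = continuous_on S f"
| "Ck_on (Suc k) S f = ((\<forall>z\<in>S. f differentiable (at z)) \<and>
       (\<forall>b\<in>Basis. Ck_on k S (pderiv_dir f b)))"

definition smooth_on :: "'a::euclidean_space set \<Rightarrow> ('a \<Rightarrow> real) \<Rightarrow> bool" where
  "smooth_on S f = (\<forall>k. Ck_on k S f)"

text \<open>Coordinate directions on T R^n = R^n x R^n: dx k is d/dx^k, dy i is d/dy^i.\<close>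
definition dx :: "'n::finite \<Rightarrow> (real^'n) \<times> (real^'n)" where
  "dx k = (axis k 1, 0)"
definition dy :: "'n::finite \<Rightarrow> (real^'n) \<times> (real^'n)" where
  "dy i = (0, axis i 1)"

definition slit :: "((real^'n) \<times> (real^'n)) set" where
  "slit = {z. snd z \<noteq> 0}"

definition finsler_function :: "((real^'n) \<times> (real^'n) \<Rightarrow> real) \<Rightarrow> bool" where
  "finsler_function F \<longleftrightarrow>
     smooth_on slit F \<and>
     (\<forall>p v. v \<noteq> 0 \<longrightarrow> F (p, v) > 0) \<and>
     (\<forall>p v (c::real). c > 0 \<longrightarrow> F (p, c *\<^sub>R v) = c * F (p, v)) \<and>
     (\<forall>p v. v \<noteq> 0 \<longrightarrow> (\<forall>\<xi>::real^'n. \<xi> \<noteq> 0 \<longrightarrow>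
        (\<Sum>i\<in>UNIV. \<Sum>j\<in>UNIV.
           pderiv_dir (pderiv_dir (\<lambda>z. (F z)\<^sup>2) (dy j)) (dy i) (p, v) * \<xi>$i * \<xi>$j) > 0))"

definition minkowski :: "((real^'n) \<times> (real^'n) \<Rightarrow> real) \<Rightarrow> bool" where
  "minkowski F \<longleftrightarrow> (\<forall>p q v. F (p, v) = F (q, v))"

end

theory Submission
  imports Defs
begin

text \<open>
  Put \<open>L = F\<^sup>2\<close>, a function positively homogeneous of degree 2 in \<open>y\<close>. Euler's relation
  \<open>y\<^sup>k \<partial>L/\<partial>y\<^sup>k = 2L\<close>, differentiated in \<open>x\<^sup>i\<close>, gives \<open>y\<^sup>k \<partial>\<^sup>2L/\<partial>x\<^sup>i\<partial>y\<^sup>k = 2 \<partial>L/\<partial>x\<^sup>i\<close>, so the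
  condition says \<open>y\<^sup>k \<partial>\<^sup>2L/\<partial>x\<^sup>k\<partial>y\<^sup>i = \<partial>L/\<partial>x\<^sup>i\<close>. Differentiating this in \<open>y\<^sup>j\<close> and using the
  symmetry of third derivatives shows that the matrix \<open>\<partial>\<^sup>2L/\<partial>x\<^sup>j\<partial>y\<^sup>i\<close> is symmetric, hence
  \<open>\<partial>L/\<partial>x\<^sup>i = 2 \<partial>L/\<partial>x\<^sup>i = 0\<close> and \<open>L\<close> does not depend on \<open>x\<close>. The converse is immediate.
\<close>

section \<open>Directional derivatives\<close>

lemma has_real_derivative_pderiv_dir_line:
  fixes f :: "'a::euclidean_space \<Rightarrow> real"
  assumes "f differentiable (at (x + s *\<^sub>R u))"
  shows "((\<lambda>s. f (x + s *\<^sub>R u)) has_real_derivative pderiv_dir f u (x + s *\<^sub>R u)) (at s)"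
proof -
  let ?f' = "frechet_derivative f (at (x + s *\<^sub>R u))"
  have "(f has_derivative ?f') (at (x + s *\<^sub>R u))"
    using assms frechet_derivative_works by blast
  moreover have "((\<lambda>s. x + s *\<^sub>R u) has_derivative (\<lambda>h. h *\<^sub>R u)) (at s)"
    by (auto intro!: derivative_eq_intros)
  ultimately have "((\<lambda>s. f (x + s *\<^sub>R u)) has_derivative (\<lambda>h. ?f' (h *\<^sub>R u))) (at s)"
    using has_derivative_compose[of "\<lambda>s. x + s *\<^sub>R u"] by blast
  moreover have "(\<lambda>h. ?f' (h *\<^sub>R u)) = (\<lambda>h. ?f' u * h)"
    using linear_scale[OF linear_frechet_derivative[OF assms]] by (auto simp: mult.commute)
  ultimately show ?thesis by (simp add: has_field_derivative_def pderiv_dir_def)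
qed

lemma pderiv_dir_eqI:
  assumes "(f has_derivative f') (at z)"
  shows "pderiv_dir f b z = f' b"
  using frechet_derivative_at[OF assms] by (simp add: pderiv_dir_def)

lemma pderiv_dir_cong_open:
  assumes "open S" "z \<in> S" "\<And>x. x \<in> S \<Longrightarrow> f x = g x"
  shows "pderiv_dir f b z = pderiv_dir g b z"
proof -
  have "(f has_derivative f') (at z) \<longleftrightarrow> (g has_derivative f') (at z)" for f'
    using has_derivative_transform_within_open[OF _ assms(1,2), of f _ UNIV g]
      has_derivative_transform_within_open[OF _ assms(1,2), of g _ UNIV f] assms(3)
    by auto
  then show ?thesis unfolding pderiv_dir_def frechet_derivative_def by simp
qed

lemma pderiv_dir_add:
  assumes "f differentiable (at z)" "g differentiable (at z)"
  shows "pderiv_dir (\<lambda>x. f x + g x) b z = pderiv_dir f b z + pderiv_dir g b z"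
  using pderiv_dir_eqI[OF has_derivative_add[OF assms[unfolded frechet_derivative_works]]]
  by (simp add: pderiv_dir_def)

lemma pderiv_dir_mult:
  assumes "f differentiable (at z)" "g differentiable (at z)"
  shows "pderiv_dir (\<lambda>x. f x * g x) b z = f z * pderiv_dir g b z + pderiv_dir f b z * g z"
  using pderiv_dir_eqI[OF has_derivative_mult[OF assms[unfolded frechet_derivative_works]]]
  by (simp add: pderiv_dir_def)

lemma pderiv_dir_cmult:
  assumes "f differentiable (at z)"
  shows "pderiv_dir (\<lambda>x. c * f x) b z = c * pderiv_dir f b z"
  using pderiv_dir_eqI[OF has_derivative_mult_right[OF assms[unfolded frechet_derivative_works]]]
  by (simp add: pderiv_dir_def)

lemma pderiv_dir_eq_0_if_constant_on_line:
  fixes f :: "'a::euclidean_space \<Rightarrow> real"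
  assumes "f differentiable (at z)" "\<And>t. f (z + t *\<^sub>R u) = f z"
  shows "pderiv_dir f u z = 0"
proof -
  have "((\<lambda>t. f (z + t *\<^sub>R u)) has_real_derivative pderiv_dir f u (z + 0 *\<^sub>R u)) (at 0)"
    by (rule has_real_derivative_pderiv_dir_line) (use assms in simp)
  then have "((\<lambda>t. f z) has_real_derivative pderiv_dir f u z) (at 0)"
    using assms(2) by simp
  then show ?thesis using DERIV_unique DERIV_const by blast
qed

text \<open>No differentiability is needed: the translation maps the derivatives of \<open>f\<close> at \<open>z\<close>
  bijectively onto those at \<open>z + c\<close>, so the choice in \<open>frechet_derivative\<close> agrees.\<close>
lemma pderiv_dir_translate:
  fixes f :: "'a::euclidean_space \<Rightarrow> real"
  assumes "\<And>y. f (y + c) = f y"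
  shows "pderiv_dir f b (z + c) = pderiv_dir f b z"
proof -
  have shift: "(f has_derivative f') (at (x + d))"
    if "(f has_derivative f') (at x)" "\<And>y. f (y - d) = f y" for x d f'
  proof -
    have "((\<lambda>y. y - d) has_derivative (\<lambda>h. h)) (at (x + d))"
      by (auto intro!: derivative_eq_intros)
    moreover have "(f has_derivative f') (at ((\<lambda>y. y - d) (x + d)))"
      using that(1) by simp
    ultimately show ?thesis
      using has_derivative_compose[of "\<lambda>y. y - d"] that(2) by fastforce
  qed
  have "f (y - c) = f y" "f (y - - c) = f y" for y
    using assms[of "y - c"] assms[of y] by simp_all
  then have "(f has_derivative f') (at (z + c)) \<longleftrightarrow> (f has_derivative f') (at z)" for f'
    using shift[of f' z c] shift[of f' "z + c" "- c"] by auto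
  then show ?thesis unfolding pderiv_dir_def frechet_derivative_def by simp
qed

section \<open>Symmetry of second derivatives\<close>

lemma dist_add_scaleR_le:
  fixes z u w :: "'a::real_normed_vector"
  assumes "0 \<le> a" "a \<le> t" "0 \<le> b" "b \<le> t"
  shows "dist z (z + a *\<^sub>R u + b *\<^sub>R w) \<le> t * (norm u + norm w)"
proof -
  have "dist z (z + a *\<^sub>R u + b *\<^sub>R w) = norm (a *\<^sub>R u + b *\<^sub>R w)"
    by (simp add: dist_norm algebra_simps norm_minus_commute[of "- (a *\<^sub>R u)"])
  also have "\<dots> \<le> a * norm u + b * norm w"
    using norm_triangle_ineq[of "a *\<^sub>R u" "b *\<^sub>R w"] assms by simp
  also have "\<dots> \<le> t * norm u + t * norm w"
    using assms by (intro add_mono mult_right_mono) auto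
  finally show ?thesis by (simp add: algebra_simps)
qed

lemma second_difference_mean_value:
  fixes f :: "'a::euclidean_space \<Rightarrow> real"
  assumes df: "\<forall>x\<in>ball z e. f differentiable (at x)"
    and dfu: "\<forall>x\<in>ball z e. pderiv_dir f u differentiable (at x)"
    and t: "0 < t" "t * (norm u + norm w) < e"
  shows "\<exists>\<xi>. dist z \<xi> \<le> t * (norm u + norm w) \<and>
     f (z + t *\<^sub>R w + t *\<^sub>R u) - f (z + t *\<^sub>R w) - f (z + t *\<^sub>R u) + f z
       = t\<^sup>2 * pderiv_dir (pderiv_dir f u) w \<xi>"
proof -
  have inb: "z + a *\<^sub>R u + b *\<^sub>R w \<in> ball z e" if "0 \<le> a" "a \<le> t" "0 \<le> b" "b \<le> t" for a b
    using dist_add_scaleR_le[OF that, of z u w] t by simp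
  define g where "g s = f ((z + t *\<^sub>R w) + s *\<^sub>R u) - f (z + s *\<^sub>R u)" for s
  have "DERIV g s :> pderiv_dir f u ((z + t *\<^sub>R w) + s *\<^sub>R u) - pderiv_dir f u (z + s *\<^sub>R u)"
    if "0 \<le> s" "s \<le> t" for s
  proof -
    have "(z + t *\<^sub>R w) + s *\<^sub>R u \<in> ball z e" "z + s *\<^sub>R u \<in> ball z e"
      using inb[of s t] inb[of s 0] that t by (simp_all add: algebra_simps)
    then show ?thesis unfolding g_def
      by (intro DERIV_diff has_real_derivative_pderiv_dir_line) (use df in auto)
  qed
  from MVT2[OF t(1) this] obtain \<sigma> where \<sigma>: "0 < \<sigma>" "\<sigma> < t"
    "g t - g 0 = (t - 0) * (pderiv_dir f u ((z + t *\<^sub>R w) + \<sigma> *\<^sub>R u) - pderiv_dir f u (z + \<sigma> *\<^sub>R u))"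
    by auto
  define h where "h r = pderiv_dir f u ((z + \<sigma> *\<^sub>R u) + r *\<^sub>R w)" for r
  have "DERIV h r :> pderiv_dir (pderiv_dir f u) w ((z + \<sigma> *\<^sub>R u) + r *\<^sub>R w)"
    if "0 \<le> r" "r \<le> t" for r
    unfolding h_def using inb[of \<sigma> r] that \<sigma> dfu
    by (intro has_real_derivative_pderiv_dir_line) auto
  from MVT2[OF t(1) this] obtain \<tau> where \<tau>: "0 < \<tau>" "\<tau> < t"
    "h t - h 0 = (t - 0) * pderiv_dir (pderiv_dir f u) w ((z + \<sigma> *\<^sub>R u) + \<tau> *\<^sub>R w)"
    by auto
  have "f (z + t *\<^sub>R w + t *\<^sub>R u) - f (z + t *\<^sub>R w) - f (z + t *\<^sub>R u) + f z = g t - g 0"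
    unfolding g_def by simp
  also have "\<dots> = t * (h t - h 0)"
    using \<sigma>(3) unfolding h_def by (simp add: algebra_simps)
  also have "\<dots> = t\<^sup>2 * pderiv_dir (pderiv_dir f u) w ((z + \<sigma> *\<^sub>R u) + \<tau> *\<^sub>R w)"
    using \<tau>(3) by (simp add: power2_eq_square)
  finally show ?thesis
    using dist_add_scaleR_le[of \<sigma> t \<tau> z u w] \<sigma> \<tau> by (intro exI[of _ "(z + \<sigma> *\<^sub>R u) + \<tau> *\<^sub>R w"]) auto
qed

lemma pderiv_dir_commute:
  fixes f :: "'a::euclidean_space \<Rightarrow> real"
  assumes S: "open S" "z \<in> S"
    and df: "\<forall>x\<in>S. f differentiable (at x)"
    and dfu: "\<forall>x\<in>S. pderiv_dir f u differentiable (at x)"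
    and dfw: "\<forall>x\<in>S. pderiv_dir f w differentiable (at x)"
    and cuw: "continuous_on S (pderiv_dir (pderiv_dir f u) w)"
    and cwu: "continuous_on S (pderiv_dir (pderiv_dir f w) u)"
  shows "pderiv_dir (pderiv_dir f u) w z = pderiv_dir (pderiv_dir f w) u z"
proof -
  let ?A = "pderiv_dir (pderiv_dir f u) w" and ?B = "pderiv_dir (pderiv_dir f w) u"
  obtain e where e: "e > 0" "ball z e \<subseteq> S"
    using S open_contains_ball by blast
  define M where "M = norm u + norm w"
  define r where "r n = e / (2 * (M + 1)) * inverse (real (Suc n))" for n
  have M: "0 \<le> M" unfolding M_def by simp
  have r: "0 < r n" "r n * M < e" for n
  proof -
    have "inverse (real (Suc n)) \<le> 1" by (simp add: inverse_le_1_iff)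
    then have "r n * M \<le> e / (2 * (M + 1)) * M"
      unfolding r_def using e M by (intro mult_right_mono mult_left_le) auto
    also have "\<dots> < e" using e M by (simp add: field_simps add_nonneg_pos)
    finally show "r n * M < e" .
    show "0 < r n" unfolding r_def using e M by simp
  qed
  have "\<exists>\<xi> \<eta>. dist z \<xi> \<le> r n * M \<and> dist z \<eta> \<le> r n * M \<and> ?A \<xi> = ?B \<eta>" for n
  proof -
    have ball: "\<forall>x\<in>ball z e. f differentiable (at x)"
      "\<forall>x\<in>ball z e. pderiv_dir f u differentiable (at x)"
      "\<forall>x\<in>ball z e. pderiv_dir f w differentiable (at x)"
      using df dfu dfw e(2) by auto
    obtain \<xi> where \<xi>: "dist z \<xi> \<le> r n * M"
      "f (z + r n *\<^sub>R w + r n *\<^sub>R u) - f (z + r n *\<^sub>R w) - f (z + r n *\<^sub>R u) + f z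
         = (r n)\<^sup>2 * ?A \<xi>"
      using second_difference_mean_value[OF ball(1,2) r(1)] r(2) unfolding M_def by blast
    have "r n * (norm w + norm u) < e"
      using r(2) unfolding M_def by (simp add: add.commute)
    from second_difference_mean_value[OF ball(1,3) r(1) this] obtain \<eta> where \<eta>:
      "dist z \<eta> \<le> r n * M"
      "f (z + r n *\<^sub>R u + r n *\<^sub>R w) - f (z + r n *\<^sub>R u) - f (z + r n *\<^sub>R w) + f z
         = (r n)\<^sup>2 * ?B \<eta>"
      unfolding M_def by (auto simp: add.commute)
    have "?A \<xi> = ?B \<eta>"
      using \<xi>(2) \<eta>(2) r(1)[of n] by (simp add: algebra_simps)
    with \<xi>(1) \<eta>(1) show ?thesis by blast
  qed
  then obtain \<xi> \<eta> where \<xi>\<eta>: "\<And>n. dist z (\<xi> n) \<le> r n * M" "\<And>n. dist z (\<eta> n) \<le> r n * M"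
    "\<And>n. ?A (\<xi> n) = ?B (\<eta> n)"
    by metis
  have "(\<lambda>n. r n * M) \<longlonglongrightarrow> 0"
    unfolding r_def by (intro tendsto_mult_left_zero tendsto_mult_right_zero LIMSEQ_inverse_real_of_nat)
  then have "\<xi> \<longlonglongrightarrow> z" "\<eta> \<longlonglongrightarrow> z"
    using \<xi>\<eta>(1,2) unfolding tendsto_dist_iff[of _ z]
    by (auto intro!: Lim_null_comparison[where g = "\<lambda>n. r n * M"] simp: dist_commute)
  moreover have "isCont ?A z" "isCont ?B z"
    using cuw cwu S continuous_on_eq_continuous_at by blast+
  ultimately have "(\<lambda>n. ?A (\<xi> n)) \<longlonglongrightarrow> ?A z" "(\<lambda>n. ?B (\<eta> n)) \<longlonglongrightarrow> ?B z"
    by (auto intro: isCont_tendsto_compose)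
  then show ?thesis using LIMSEQ_unique \<xi>\<eta>(3) by simp
qed

lemma Ck_on_cong:
  assumes "open S" "\<And>x. x \<in> S \<Longrightarrow> f x = g x"
  shows "Ck_on k S f = Ck_on k S g"
  using assms(2)
proof (induction k arbitrary: f g)
  case 0
  then show ?case using continuous_on_cong[OF refl, of S f g] by simp
next
  case (Suc k)
  have "f differentiable (at z) \<longleftrightarrow> g differentiable (at z)" if "z \<in> S" for z
    using has_derivative_transform_within_open[OF _ assms(1) that, of f _ UNIV g]
      has_derivative_transform_within_open[OF _ assms(1) that, of g _ UNIV f] Suc.prems
    unfolding differentiable_def by metis
  moreover have "Ck_on k S (pderiv_dir f b) = Ck_on k S (pderiv_dir g b)" for b
    by (rule Suc.IH) (rule pderiv_dir_cong_open[OF assms(1)], assumption, rule Suc.prems)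
  ultimately show ?case by (simp only: Ck_on.simps) blast
qed

lemma Ck_on_Suc_imp_Ck_on: "Ck_on (Suc k) S f \<Longrightarrow> Ck_on k S f"
proof (induction k arbitrary: f)
  case 0
  then show ?case
    by (auto intro!: continuous_at_imp_continuous_on differentiable_imp_continuous_within)
next
  case (Suc k)
  then show ?case by (simp only: Ck_on.simps) blast
qed

lemma Ck_on_add:
  assumes "open S"
  shows "Ck_on k S f \<Longrightarrow> Ck_on k S g \<Longrightarrow> Ck_on k S (\<lambda>x. f x + g x)"
proof (induction k arbitrary: f g)
  case 0
  then show ?case using continuous_on_add[of S f g] by simp
next
  case (Suc k)
  then have df: "\<forall>z\<in>S. f differentiable (at z)" "\<forall>z\<in>S. g differentiable (at z)"
    and pf: "\<forall>b\<in>Basis. Ck_on k S (pderiv_dir f b)" "\<forall>b\<in>Basis. Ck_on k S (pderiv_dir g b)"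
    by auto
  have "Ck_on k S (pderiv_dir (\<lambda>x. f x + g x) b)" if "b \<in> Basis" for b
  proof -
    have "Ck_on k S (\<lambda>x. pderiv_dir f b x + pderiv_dir g b x)"
      using Suc.IH pf that by blast
    moreover have "Ck_on k S (pderiv_dir (\<lambda>x. f x + g x) b)
        = Ck_on k S (\<lambda>x. pderiv_dir f b x + pderiv_dir g b x)"
      by (rule Ck_on_cong[OF assms]) (use df in \<open>intro pderiv_dir_add; auto\<close>)
    ultimately show ?thesis by simp
  qed
  with df show ?case by (auto intro: differentiable_add)
qed

lemma Ck_on_mult:
  assumes "open S"
  shows "Ck_on k S f \<Longrightarrow> Ck_on k S g \<Longrightarrow> Ck_on k S (\<lambda>x. f x * g x)"
proof (induction k arbitrary: f g)
  case 0
  then show ?case using continuous_on_mult[of S f g] by simp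
next
  case (Suc k)
  then have df: "\<forall>z\<in>S. f differentiable (at z)" "\<forall>z\<in>S. g differentiable (at z)"
    and pf: "\<forall>b\<in>Basis. Ck_on k S (pderiv_dir f b)" "\<forall>b\<in>Basis. Ck_on k S (pderiv_dir g b)"
    by auto
  have fg: "Ck_on k S f" "Ck_on k S g"
    using Suc.prems Ck_on_Suc_imp_Ck_on by blast+
  have "Ck_on k S (pderiv_dir (\<lambda>x. f x * g x) b)" if "b \<in> Basis" for b
  proof -
    have "Ck_on k S (\<lambda>x. f x * pderiv_dir g b x + pderiv_dir f b x * g x)"
      using Suc.IH fg pf that by (intro Ck_on_add[OF assms]) blast+
    moreover have "Ck_on k S (pderiv_dir (\<lambda>x. f x * g x) b)
        = Ck_on k S (\<lambda>x. f x * pderiv_dir g b x + pderiv_dir f b x * g x)"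
      by (rule Ck_on_cong[OF assms]) (use df in \<open>intro pderiv_dir_mult; auto\<close>)
    ultimately show ?thesis by simp
  qed
  with df show ?case by (auto intro: differentiable_mult)
qed

lemma smooth_on_mult:
  "open S \<Longrightarrow> smooth_on S f \<Longrightarrow> smooth_on S g \<Longrightarrow> smooth_on S (\<lambda>x. f x * g x)"
  unfolding smooth_on_def using Ck_on_mult by blast

lemma smooth_on_pderiv_dir: "smooth_on S f \<Longrightarrow> b \<in> Basis \<Longrightarrow> smooth_on S (pderiv_dir f b)"
  unfolding smooth_on_def by (metis Ck_on.simps(2))

lemma smooth_on_differentiable: "smooth_on S f \<Longrightarrow> z \<in> S \<Longrightarrow> f differentiable (at z)"
  unfolding smooth_on_def by (metis Ck_on.simps(2))

lemma smooth_on_pderiv_dir_commute: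
  assumes "open S" "z \<in> S" "smooth_on S f" "u \<in> Basis" "w \<in> Basis"
  shows "pderiv_dir (pderiv_dir f u) w z = pderiv_dir (pderiv_dir f w) u z"
proof (rule pderiv_dir_commute[OF assms(1,2)])
  show "continuous_on S (pderiv_dir (pderiv_dir f u) w)" "continuous_on S (pderiv_dir (pderiv_dir f w) u)"
    using assms(3-5) smooth_on_pderiv_dir unfolding smooth_on_def by (metis Ck_on.simps(1))+
qed (use assms smooth_on_differentiable smooth_on_pderiv_dir in blast)+

lemma dx_in_Basis: "dx k \<in> Basis"
  unfolding dx_def Basis_prod_def Basis_vec_def by auto

lemma dy_in_Basis: "dy k \<in> Basis"
  unfolding dy_def Basis_prod_def Basis_vec_def by auto

lemma open_slit: "open (slit :: ((real^'n) \<times> (real^'n)) set)"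
  unfolding slit_def by (intro open_Collect_neq continuous_intros)

lemma Pair_in_slit_iff [simp]: "(p, v) \<in> slit \<longleftrightarrow> v \<noteq> 0"
  unfolding slit_def by simp

lemma vec_eq_sum_axis: "(h::real^'n) = (\<Sum>i\<in>UNIV. h $ i *\<^sub>R axis i 1)"
  by (simp add: vec_eq_iff sum_component axis_def) (simp add: if_distrib cong: if_cong)

lemma frechet_derivative_horizontal:
  fixes f :: "(real^'n) \<times> (real^'n) \<Rightarrow> real"
  assumes "f differentiable (at z)"
  shows "frechet_derivative f (at z) (h, 0) = (\<Sum>i\<in>UNIV. h $ i * pderiv_dir f (dx i) z)"
proof -
  have "(h, 0) = (\<Sum>i\<in>UNIV. h $ i *\<^sub>R dx i)"
    by (simp add: dx_def prod_eq_iff fst_sum snd_sum) (rule vec_eq_sum_axis)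
  with linear_frechet_derivative[OF assms] show ?thesis
    by (simp add: linear_sum linear_scale pderiv_dir_def)
qed

lemma frechet_derivative_vertical:
  fixes f :: "(real^'n) \<times> (real^'n) \<Rightarrow> real"
  assumes "f differentiable (at z)"
  shows "frechet_derivative f (at z) (0, h) = (\<Sum>i\<in>UNIV. h $ i * pderiv_dir f (dy i) z)"
proof -
  have "(0, h) = (\<Sum>i\<in>UNIV. h $ i *\<^sub>R dy i)"
    by (simp add: dy_def prod_eq_iff fst_sum snd_sum) (rule vec_eq_sum_axis)
  with linear_frechet_derivative[OF assms] show ?thesis
    by (simp add: linear_sum linear_scale pderiv_dir_def)
qed

lemma sum_snd_dy_mult: "(\<Sum>k\<in>UNIV. snd (dy j) $ k * f k) = f j"
  unfolding dy_def axis_def by (simp add: if_distrib[of "\<lambda>x. x * _"] cong: if_cong)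

lemma has_derivative_sum_snd_mult:
  fixes G :: "'n \<Rightarrow> (real^'n) \<times> (real^'n) \<Rightarrow> real"
  assumes "\<And>k. G k differentiable (at z)"
  shows "((\<lambda>z. \<Sum>k\<in>UNIV. snd z $ k * G k z) has_derivative
      (\<lambda>h. \<Sum>k\<in>UNIV. snd z $ k * frechet_derivative (G k) (at z) h + snd h $ k * G k z)) (at z)"
proof -
  have "((\<lambda>z. snd z $ k) has_derivative (\<lambda>h. snd h $ k)) (at z)" for k
    by (intro bounded_linear_imp_has_derivative bounded_linear_compose[OF bounded_linear_vec_nth]
        bounded_linear_snd)
  then show ?thesis
    by (intro has_derivative_sum has_derivative_mult frechet_derivative_works[THEN iffD1] assms)
qed

lemma pderiv_dir_sum_snd_mult:
  fixes G :: "'n \<Rightarrow> (real^'n) \<times> (real^'n) \<Rightarrow> real"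
  assumes "\<And>k. G k differentiable (at z)"
  shows "pderiv_dir (\<lambda>z. \<Sum>k\<in>UNIV. snd z $ k * G k z) b z
     = (\<Sum>k\<in>UNIV. snd b $ k * G k z + snd z $ k * pderiv_dir (G k) b z)"
  using pderiv_dir_eqI[OF has_derivative_sum_snd_mult[of G, OF assms], of b]
  by (simp add: pderiv_dir_def add.commute)

section \<open>Minkowski spaces\<close>

lemma minkowski_pderiv_dir:
  fixes g :: "(real^'n) \<times> (real^'n) \<Rightarrow> real"
  assumes "minkowski g"
  shows "minkowski (pderiv_dir g b)"
  unfolding minkowski_def
proof (intro allI)
  fix p q v
  have "g (y + (q - p, 0)) = g y" for y
    using assms by (cases y) (simp add: minkowski_def)
  from pderiv_dir_translate[of g, OF this, of b "(p, v)"]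
  show "pderiv_dir g b (p, v) = pderiv_dir g b (q, v)" by simp
qed

lemma pderiv_dir_dx_eq_0_if_minkowski:
  fixes g :: "(real^'n) \<times> (real^'n) \<Rightarrow> real"
  assumes "minkowski g" "g differentiable (at z)"
  shows "pderiv_dir g (dx k) z = 0"
proof (rule pderiv_dir_eq_0_if_constant_on_line[OF assms(2)])
  show "g (z + t *\<^sub>R dx k) = g z" for t
    using assms(1) by (cases z) (simp add: minkowski_def dx_def)
qed

lemma minkowski_if_pderiv_dir_dx_eq_0:
  fixes g :: "(real^'n) \<times> (real^'n) \<Rightarrow> real"
  assumes dg: "\<And>z. z \<in> slit \<Longrightarrow> g differentiable (at z)"
    and dx0: "\<And>z k. z \<in> slit \<Longrightarrow> pderiv_dir g (dx k) z = 0"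
    and "\<And>p q. g (p, 0) = g (q, 0)"
  shows "minkowski g"
  unfolding minkowski_def
proof (intro allI)
  fix p q v
  show "g (p, v) = g (q, v)"
  proof (cases "v = 0")
    case True
    with assms(3) show ?thesis by simp
  next
    case False
    have "((\<lambda>x. g (x, v)) has_derivative (\<lambda>h. 0)) (at x within UNIV)" for x
    proof -
      have z: "(x, v) \<in> slit" using False by simp
      have "((\<lambda>x. (x, v)) has_derivative (\<lambda>h. (h, 0))) (at x)"
        by (auto intro!: derivative_eq_intros)
      moreover have "(g has_derivative frechet_derivative g (at (x, v))) (at ((\<lambda>x. (x, v)) x))"
        using frechet_derivative_works[THEN iffD1, OF dg[OF z]] by simp
      ultimately have "((\<lambda>x. g (x, v)) has_derivative (\<lambda>h. frechet_derivative g (at (x, v)) (h, 0))) (at x)"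
        using has_derivative_compose[of "\<lambda>x. (x, v)"] by blast
      then show ?thesis
        using frechet_derivative_horizontal[OF dg[OF z]] dx0[OF z] by simp
    qed
    then obtain c where "\<forall>x\<in>UNIV. g (x, v) = c"
      using has_derivative_zero_constant[OF convex_UNIV] by metis
    then show ?thesis by simp
  qed
qed

lemma minkowski_power2_iff:
  fixes F :: "(real^'n) \<times> (real^'n) \<Rightarrow> real"
  assumes "\<And>p v. 0 \<le> F (p, v)"
  shows "minkowski (\<lambda>z. (F z)\<^sup>2) \<longleftrightarrow> minkowski F"
  using assms by (simp add: minkowski_def power2_eq_iff_nonneg)

lemma euler_homogeneous:
  fixes L :: "(real^'n) \<times> (real^'n) \<Rightarrow> real"
  assumes hom: "\<And>c. c > 0 \<Longrightarrow> L (p, c *\<^sub>R v) = c ^ r * L (p, v)"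
    and dL: "L differentiable (at (p, v))"
  shows "(\<Sum>k\<in>UNIV. v $ k * pderiv_dir L (dy k) (p, v)) = r * L (p, v)"
proof -
  have "((\<lambda>c. L ((p, 0) + c *\<^sub>R (0, v))) has_real_derivative pderiv_dir L (0, v) ((p, 0) + 1 *\<^sub>R (0, v))) (at 1)"
    by (rule has_real_derivative_pderiv_dir_line) (simp add: dL)
  then have "((\<lambda>c. L ((p, 0) + c *\<^sub>R (0, v))) has_real_derivative frechet_derivative L (at (p, v)) (0, v)) (at 1)"
    by (simp add: pderiv_dir_def)
  then have "((\<lambda>c. c ^ r * L (p, v)) has_real_derivative frechet_derivative L (at (p, v)) (0, v)) (at 1)"
    by (rule has_field_derivative_transform_within_open[of _ _ _ "{0<..}"]) (auto simp: hom)
  moreover have "((\<lambda>c. c ^ r * L (p, v)) has_real_derivative (r * L (p, v))) (at 1)"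
    by (auto intro!: derivative_eq_intros)
  ultimately show ?thesis
    using DERIV_unique frechet_derivative_vertical[OF dL, of v] by metis
qed

lemma euler_homogeneous_pderiv_dir_dx:
  fixes L :: "(real^'n) \<times> (real^'n) \<Rightarrow> real"
  assumes sL: "smooth_on slit L"
    and hom: "\<And>p v c. c > 0 \<Longrightarrow> L (p, c *\<^sub>R v) = c ^ r * L (p, v)"
    and z: "z \<in> slit"
  shows "(\<Sum>k\<in>UNIV. snd z $ k * pderiv_dir (pderiv_dir L (dy k)) (dx i) z)
    = r * pderiv_dir L (dx i) z"
proof -
  have euler: "(\<Sum>k\<in>UNIV. snd x $ k * pderiv_dir L (dy k) x) = r * L x" if "x \<in> slit" for x
    using that by (cases x) (auto intro!: euler_homogeneous hom smooth_on_differentiable[OF sL])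
  have "(\<Sum>k\<in>UNIV. snd z $ k * pderiv_dir (pderiv_dir L (dy k)) (dx i) z)
      = pderiv_dir (\<lambda>x. \<Sum>k\<in>UNIV. snd x $ k * pderiv_dir L (dy k) x) (dx i) z"
    using smooth_on_differentiable[OF smooth_on_pderiv_dir[OF sL dy_in_Basis] z]
    by (subst pderiv_dir_sum_snd_mult) (simp_all add: dx_def)
  also have "\<dots> = pderiv_dir (\<lambda>x. r * L x) (dx i) z"
    by (rule pderiv_dir_cong_open[OF open_slit z euler])
  also have "\<dots> = r * pderiv_dir L (dx i) z"
    by (rule pderiv_dir_cmult[OF smooth_on_differentiable[OF sL z]])
  finally show ?thesis .
qed

text \<open>Differentiating the hypothesis in \<open>y\<^sup>j\<close> gives \<open>A\<^sub>i\<^sub>j + T\<^sub>i\<^sub>j = A\<^sub>j\<^sub>i\<close>, where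
  \<open>A\<^sub>i\<^sub>j = \<partial>\<^sup>2L/\<partial>x\<^sup>j\<partial>y\<^sup>i\<close> and \<open>T\<^sub>i\<^sub>j = y\<^sup>k \<partial>\<^sup>3L/\<partial>y\<^sup>j\<partial>x\<^sup>k\<partial>y\<^sup>i\<close> is symmetric in \<open>i, j\<close>.\<close>
lemma pderiv_dir_dy_dx_symmetric:
  fixes L :: "(real^'n) \<times> (real^'n) \<Rightarrow> real"
  assumes sL: "smooth_on slit L"
    and C: "\<And>z i. z \<in> slit \<Longrightarrow>
      (\<Sum>k\<in>UNIV. snd z $ k * pderiv_dir (pderiv_dir L (dy i)) (dx k) z) = pderiv_dir L (dx i) z"
    and z: "z \<in> slit"
  shows "pderiv_dir (pderiv_dir L (dy i)) (dx j) z = pderiv_dir (pderiv_dir L (dy j)) (dx i) z"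
proof -
  note commute = smooth_on_pderiv_dir_commute[OF open_slit]
  note sL' = smooth_on_pderiv_dir[OF sL dy_in_Basis]
  have third_symmetric: "pderiv_dir (pderiv_dir (pderiv_dir L (dy a)) (dx k)) (dy b) z
      = pderiv_dir (pderiv_dir (pderiv_dir L (dy b)) (dx k)) (dy a) z" for a b k
  proof -
    have "pderiv_dir (pderiv_dir (pderiv_dir L (dy a)) (dx k)) (dy b) z
        = pderiv_dir (pderiv_dir (pderiv_dir L (dy a)) (dy b)) (dx k) z"
      by (rule commute[OF z sL' dx_in_Basis dy_in_Basis])
    also have "\<dots> = pderiv_dir (pderiv_dir (pderiv_dir L (dy b)) (dy a)) (dx k) z"
      by (rule pderiv_dir_cong_open[OF open_slit z commute[OF _ sL dy_in_Basis dy_in_Basis]])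
    also have "\<dots> = pderiv_dir (pderiv_dir (pderiv_dir L (dy b)) (dx k)) (dy a) z"
      by (rule commute[OF z sL' dx_in_Basis dy_in_Basis, symmetric])
    finally show ?thesis .
  qed
  have C_differentiated: "pderiv_dir (pderiv_dir L (dy a)) (dx b) z
      + (\<Sum>k\<in>UNIV. snd z $ k * pderiv_dir (pderiv_dir (pderiv_dir L (dy a)) (dx k)) (dy b) z)
      = pderiv_dir (pderiv_dir L (dy b)) (dx a) z" for a b
  proof -
    have "pderiv_dir (\<lambda>x. \<Sum>k\<in>UNIV. snd x $ k * pderiv_dir (pderiv_dir L (dy a)) (dx k) x) (dy b) z
        = pderiv_dir (pderiv_dir L (dx a)) (dy b) z"
      by (rule pderiv_dir_cong_open[OF open_slit z C])
    moreover have "pderiv_dir (pderiv_dir L (dx a)) (dy b) z = pderiv_dir (pderiv_dir L (dy b)) (dx a) z"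
      by (rule commute[OF z sL dx_in_Basis dy_in_Basis])
    moreover have "pderiv_dir (\<lambda>x. \<Sum>k\<in>UNIV. snd x $ k * pderiv_dir (pderiv_dir L (dy a)) (dx k) x) (dy b) z
        = pderiv_dir (pderiv_dir L (dy a)) (dx b) z
          + (\<Sum>k\<in>UNIV. snd z $ k * pderiv_dir (pderiv_dir (pderiv_dir L (dy a)) (dx k)) (dy b) z)"
      using smooth_on_differentiable[OF smooth_on_pderiv_dir[OF sL' dx_in_Basis] z]
      by (subst pderiv_dir_sum_snd_mult) (simp_all add: sum.distrib sum_snd_dy_mult)
    ultimately show ?thesis by simp
  qed
  show ?thesis using C_differentiated[of i j] C_differentiated[of j i] third_symmetric[of i _ j] by simp
qed

definition minkowski_criterion :: "((real^'n) \<times> (real^'n) \<Rightarrow> real) \<Rightarrow> bool" where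
  "minkowski_criterion L \<longleftrightarrow> (\<forall>p v. v \<noteq> 0 \<longrightarrow> (\<forall>i.
     (\<Sum>k\<in>UNIV. pderiv_dir (pderiv_dir L (dy i)) (dx k) (p, v) * v$k)
     = 1/2 * (\<Sum>k\<in>UNIV. pderiv_dir (pderiv_dir L (dy k)) (dx i) (p, v) * v$k)))"

lemma pderiv_dir_dx_eq_0_if_minkowski_criterion:
  fixes L :: "(real^'n) \<times> (real^'n) \<Rightarrow> real"
  assumes sL: "smooth_on slit L"
    and hom: "\<And>p v c. c > 0 \<Longrightarrow> L (p, c *\<^sub>R v) = c\<^sup>2 * L (p, v)"
    and "minkowski_criterion L"
    and z: "z \<in> slit"
  shows "pderiv_dir L (dx i) z = 0"
proof -
  have euler: "(\<Sum>k\<in>UNIV. snd x $ k * pderiv_dir (pderiv_dir L (dy k)) (dx i) x)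
      = 2 * pderiv_dir L (dx i) x" if "x \<in> slit" for x i
    using euler_homogeneous_pderiv_dir_dx[OF sL hom that] by simp
  have C: "(\<Sum>k\<in>UNIV. snd x $ k * pderiv_dir (pderiv_dir L (dy i)) (dx k) x) = pderiv_dir L (dx i) x"
    if "x \<in> slit" for x i
    using that assms(3)[unfolded minkowski_criterion_def, rule_format, where p = "fst x" and v = "snd x" and i = i]
      euler[OF that, of i]
    by (cases x) (simp add: mult.commute)
  have "pderiv_dir L (dx i) z = (\<Sum>k\<in>UNIV. snd z $ k * pderiv_dir (pderiv_dir L (dy i)) (dx k) z)"
    using C[OF z] by simp
  also have "\<dots> = (\<Sum>k\<in>UNIV. snd z $ k * pderiv_dir (pderiv_dir L (dy k)) (dx i) z)"
    using pderiv_dir_dy_dx_symmetric[OF sL C z] by simp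
  also have "\<dots> = 2 * pderiv_dir L (dx i) z"
    using euler[OF z] by simp
  finally show ?thesis by simp
qed

lemma minkowski_iff_minkowski_criterion:
  fixes L :: "(real^'n) \<times> (real^'n) \<Rightarrow> real"
  assumes sL: "smooth_on slit L"
    and hom: "\<And>p v c. c > 0 \<Longrightarrow> L (p, c *\<^sub>R v) = c\<^sup>2 * L (p, v)"
    and "\<And>p q. L (p, 0) = L (q, 0)"
  shows "minkowski L \<longleftrightarrow> minkowski_criterion L"
proof
  assume "minkowski L"
  then have "pderiv_dir (pderiv_dir L (dy i)) (dx k) (p, v) = 0" if "v \<noteq> 0" for p v i k
    using that sL by (intro pderiv_dir_dx_eq_0_if_minkowski minkowski_pderiv_dir
        smooth_on_differentiable smooth_on_pderiv_dir dy_in_Basis) auto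
  then show "minkowski_criterion L"
    unfolding minkowski_criterion_def by simp
next
  assume "minkowski_criterion L"
  with assms show "minkowski L"
    by (intro minkowski_if_pderiv_dir_dx_eq_0 smooth_on_differentiable
        pderiv_dir_dx_eq_0_if_minkowski_criterion)
qed

theorem mainTheorem9:
  fixes F :: "(real^'n) \<times> (real^'n) \<Rightarrow> real"
  assumes "finsler_function F"
  shows "minkowski F \<longleftrightarrow>
    (\<forall>p v. v \<noteq> 0 \<longrightarrow> (\<forall>i.
       (\<Sum>k\<in>UNIV. pderiv_dir (pderiv_dir (\<lambda>z. (F z)\<^sup>2) (dy i)) (dx k) (p, v) * v$k)
       = 1/2 * (\<Sum>k\<in>UNIV. pderiv_dir (pderiv_dir (\<lambda>z. (F z)\<^sup>2) (dy k)) (dx i) (p, v) * v$k)))"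
proof -
  have sF: "smooth_on slit F" and pos: "\<And>p v. v \<noteq> 0 \<Longrightarrow> F (p, v) > 0"
    and hom: "\<And>p v c. c > 0 \<Longrightarrow> F (p, c *\<^sub>R v) = c * F (p, v)"
    using assms unfolding finsler_function_def by blast+
  have F0: "F (p, 0) = 0" for p
    using hom[of 2 p 0] by simp
  have "0 \<le> F (p, v)" for p v
    using pos[of v p] F0[of p] by (cases "v = 0") auto
  then have "minkowski F \<longleftrightarrow> minkowski (\<lambda>z. (F z)\<^sup>2)"
    by (rule minkowski_power2_iff[symmetric])
  also have "\<dots> \<longleftrightarrow> minkowski_criterion (\<lambda>z. (F z)\<^sup>2)"
  proof (rule minkowski_iff_minkowski_criterion)
    show "smooth_on slit (\<lambda>z. (F z)\<^sup>2)"
      using smooth_on_mult[OF open_slit sF sF] by (simp add: power2_eq_square)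
  qed (simp_all add: hom F0 power_mult_distrib)
  finally show ?thesis
    unfolding minkowski_criterion_def .
qed

end
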